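(* Let $F:\mathbb{R}^n\to\mathbb{R}$ be smooth, $L=\{(q,\nabla F(q)):q\in\mathbb{R}^n\}\subset\mathbb{R}^{2n}$, and $\Psi:\mathbb{R}^n\times\mathbb{R}^n\to\mathbb{R}^{2n}$, $\Psi(q,w)=(q+w,\nabla F(q)+\nabla^2F(q)w)$. Then the set $\Delta$ of critical points of $\Psi$ is $$\Delta=\{(q,w)\in\mathbb{R}^n\times\mathbb{R}^n:\ \text{the linear map }\mathbb{R}^n\ni\zeta\mapsto\nabla^3F(q)[\zeta,w]\in\mathbb{R}^n\ \text{is singular}\}.$$ Consequently, a point $\Psi(q,w)$ belongs to the wall $\Sigma=\Psi(\Delta)$ if and only if the linear map $\zeta\mapsto\nabla^3F(q)[\zeta,w]$ does not have full rank.
   Context: $\nabla^2F(q)$ is the Hessian matrix, and $\nabla^3F(q)[v,\zeta]=\big(\sum_{i,j}F_{1ij}(q)v_i\zeta_j,\dots,\sum_{i,j}F_{nij}(q)v_i\zeta_j\big)$ with $F_{kij}=\partial^3F/\partial q_k\partial q_i\partial q_j$. $L$ is a Lagrangian submanifold of $\mathbb{R}^{2n}$ (standard symplectic form $\sum dp_i\wedge dq_i$), $\mathbb{R}^n\times\mathbb{R}^n$ is identified with $TL$ via $(q,w)\mapsto$ the tangent vector $(w,\nabla^2F(q)w)$ at $(q,\nabla F(q))$, and $\Psi$ corresponds to $(X,W)\mapsto X+W$. *)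

theory Defs
  imports "HOL-Analysis.Analysis"
begin

definition partial :: "'n::finite \<Rightarrow> (real^'n \<Rightarrow> real) \<Rightarrow> real^'n \<Rightarrow> real" where
  "partial i f x = deriv (\<lambda>t. f (x + t *\<^sub>R axis i 1)) 0"

definition iter_partial :: "'n::finite list \<Rightarrow> (real^'n \<Rightarrow> real) \<Rightarrow> real^'n \<Rightarrow> real" where
  "iter_partial is f = foldr partial is f"

definition smooth_fun :: "(real^'n::finite \<Rightarrow> real) \<Rightarrow> bool" where
  "smooth_fun f \<longleftrightarrow> (\<forall>is. iter_partial is f differentiable_on UNIV)"

definition grad :: "(real^'n::finite \<Rightarrow> real) \<Rightarrow> real^'n \<Rightarrow> real^'n" where
  "grad f q = (\<chi> i. partial i f q)"

definition hessian :: "(real^'n::finite \<Rightarrow> real) \<Rightarrow> real^'n \<Rightarrow> real^'n^'n" where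
  "hessian f q = (\<chi> i j. partial i (partial j f) q)"

definition third_deriv :: "(real^'n::finite \<Rightarrow> real) \<Rightarrow> real^'n \<Rightarrow> real^'n \<Rightarrow> real^'n \<Rightarrow> real^'n" where
  "third_deriv f q v \<zeta> = (\<chi> k. \<Sum>i\<in>UNIV. \<Sum>j\<in>UNIV. partial k (partial i (partial j f)) q * v $ i * \<zeta> $ j)"

definition Psi_map :: "(real^'n::finite \<Rightarrow> real) \<Rightarrow> (real^'n) \<times> (real^'n) \<Rightarrow> (real^'n) \<times> (real^'n)" where
  "Psi_map f = (\<lambda>(q, w). (q + w, grad f q + hessian f q *v w))"

definition critical_points :: "('a::euclidean_space \<Rightarrow> 'b::euclidean_space) \<Rightarrow> 'a set" where
  "critical_points g = {x. \<not> surj (frechet_derivative g (at x))}"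

end

theory Submission
  imports Defs
begin

text \<open>
  The differential of \<open>\<Psi>\<close> at \<open>(q, w)\<close> sends \<open>(a, b)\<close> to
  \<open>(a + b, \<nabla>\<^sup>2F(q)(a + b) + \<nabla>\<^sup>3F(q)[a, w])\<close>; this uses the symmetry of
  mixed partial derivatives (Schwarz), which follows from the mean value theorem applied to
  second differences. In the coordinates \<open>(a, a + b)\<close> the differential is a shear, so it is onto
  exactly when \<open>a \<mapsto> \<nabla>\<^sup>3F(q)[a, w]\<close> is, and for a linear endomorphism of
  \<open>\<real>\<^sup>n\<close> onto means bijective. The description of the wall is then a restatement of
  what it means to lie in the image \<open>\<Psi>(\<Delta>)\<close>.
\<close>

lemma has_real_derivative_along_line:
  fixes f :: "'a::real_normed_vector \<Rightarrow> real"
  assumes "(f has_derivative f') (at (x + t *\<^sub>R v))"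
  shows "((\<lambda>s. f (x + s *\<^sub>R v)) has_real_derivative f' v) (at t)"
proof -
  have "((\<lambda>s. x + s *\<^sub>R v) has_derivative (\<lambda>s. s *\<^sub>R v)) (at t)"
    by (auto intro!: derivative_eq_intros)
  from diff_chain_at[OF this assms]
  have "((\<lambda>s. f (x + s *\<^sub>R v)) has_derivative (\<lambda>s. f' (s *\<^sub>R v))) (at t)"
    by (simp add: o_def)
  moreover have "(\<lambda>s. f' (s *\<^sub>R v)) = (*) (f' v)"
    using linear_scale[OF has_derivative_linear[OF assms]] by auto
  ultimately show ?thesis
    by (simp add: has_field_derivative_def)
qed

lemma partial_eq_derivative:
  fixes f :: "real^'n \<Rightarrow> real"
  assumes "(f has_derivative f') (at x)"
  shows "partial i f x = f' (axis i 1)"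
proof -
  have "((\<lambda>s. f (x + s *\<^sub>R axis i 1)) has_real_derivative f' (axis i 1)) (at 0)"
    using assms by (intro has_real_derivative_along_line) simp
  then show ?thesis
    unfolding partial_def by (rule DERIV_imp_deriv)
qed

lemma has_real_derivative_partial:
  fixes f :: "real^'n \<Rightarrow> real"
  assumes "f differentiable at (x + t *\<^sub>R axis i 1)"
  shows "((\<lambda>s. f (x + s *\<^sub>R axis i 1)) has_real_derivative partial i f (x + t *\<^sub>R axis i 1)) (at t)"
proof -
  obtain f' where "(f has_derivative f') (at (x + t *\<^sub>R axis i 1))"
    using assms by (auto simp: differentiable_def)
  then show ?thesis
    using has_real_derivative_along_line partial_eq_derivative by metis
qed

lemma has_derivative_partial_sum:
  fixes f :: "real^'n \<Rightarrow> real"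
  assumes "f differentiable at x"
  shows "(f has_derivative (\<lambda>v. \<Sum>k\<in>UNIV. partial k f x * v $ k)) (at x)"
proof -
  obtain f' where f': "(f has_derivative f') (at x)"
    using assms by (auto simp: differentiable_def)
  have "f' = (\<lambda>v. \<Sum>k\<in>UNIV. partial k f x * v $ k)"
  proof
    fix v
    have lin: "linear f'"
      using f' by (rule has_derivative_linear)
    have "f' v = f' (\<Sum>k\<in>UNIV. v $ k *\<^sub>R axis k 1)"
      using basis_expansion[of v] by (simp add: scalar_mult_eq_scaleR)
    also have "\<dots> = (\<Sum>k\<in>UNIV. v $ k * f' (axis k 1))"
      by (simp add: linear_sum[OF lin] linear_scale[OF lin])
    finally show "f' v = (\<Sum>k\<in>UNIV. partial k f x * v $ k)"
      by (simp add: partial_eq_derivative[OF f'] mult.commute)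
  qed
  then show ?thesis
    using f' by simp
qed

lemma has_derivative_vec_lambda:
  fixes g :: "'n::finite \<Rightarrow> 'a::real_normed_vector \<Rightarrow> real"
  assumes "\<And>i. (g i has_derivative g' i) (at x within S)"
  shows "((\<lambda>y. \<chi> i. g i y) has_derivative (\<lambda>v. \<chi> i. g' i v)) (at x within S)"
proof (rule iffD2[OF has_derivative_componentwise_within], intro ballI)
  fix b :: "real^'n"
  assume "b \<in> Basis"
  then obtain i where b: "b = axis i 1"
    using axis_inverse by blast
  show "((\<lambda>y. (\<chi> i. g i y) \<bullet> b) has_derivative (\<lambda>v. (\<chi> i. g' i v) \<bullet> b)) (at x within S)"
    unfolding b inner_axis vec_lambda_beta inner_real_def mult_1_right by (rule assms)
qed

lemma second_difference_mvt:
  fixes f :: "real^'n \<Rightarrow> real"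
  assumes df: "\<And>y. f differentiable at y" and dfi: "\<And>y. partial i f differentiable at y"
    and h: "h > 0"
  shows "\<exists>y. dist y x < 2 * h \<and>
     f (x + h *\<^sub>R axis i 1 + h *\<^sub>R axis j 1) - f (x + h *\<^sub>R axis i 1) - f (x + h *\<^sub>R axis j 1) + f x
     = h * h * partial j (partial i f) y"
proof -
  define e d :: "real^'n" where "e = axis i 1" and "d = axis j 1"
  have "\<exists>\<sigma>. 0 < \<sigma> \<and> \<sigma> < h \<and>
      f ((x + h *\<^sub>R d) + h *\<^sub>R e) - f (x + h *\<^sub>R e) - (f ((x + h *\<^sub>R d) + 0 *\<^sub>R e) - f (x + 0 *\<^sub>R e))
      = (h - 0) * (partial i f ((x + h *\<^sub>R d) + \<sigma> *\<^sub>R e) - partial i f (x + \<sigma> *\<^sub>R e))"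
    unfolding e_def by (rule MVT2[OF h]) (intro DERIV_diff has_real_derivative_partial df)
  then obtain \<sigma> where \<sigma>: "0 < \<sigma>" "\<sigma> < h" and
    "f (x + h *\<^sub>R e + h *\<^sub>R d) - f (x + h *\<^sub>R e) - f (x + h *\<^sub>R d) + f x
      = h * (partial i f ((x + \<sigma> *\<^sub>R e) + h *\<^sub>R d) - partial i f ((x + \<sigma> *\<^sub>R e) + 0 *\<^sub>R d))"
    by (auto simp: algebra_simps)
  moreover have "\<exists>\<tau>. 0 < \<tau> \<and> \<tau> < h \<and>
      partial i f ((x + \<sigma> *\<^sub>R e) + h *\<^sub>R d) - partial i f ((x + \<sigma> *\<^sub>R e) + 0 *\<^sub>R d)
      = (h - 0) * partial j (partial i f) ((x + \<sigma> *\<^sub>R e) + \<tau> *\<^sub>R d)"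
    unfolding d_def by (rule MVT2[OF h]) (intro has_real_derivative_partial dfi)
  then obtain \<tau> where \<tau>: "0 < \<tau>" "\<tau> < h" and
    "partial i f ((x + \<sigma> *\<^sub>R e) + h *\<^sub>R d) - partial i f ((x + \<sigma> *\<^sub>R e) + 0 *\<^sub>R d)
      = h * partial j (partial i f) (x + \<sigma> *\<^sub>R e + \<tau> *\<^sub>R d)"
    by auto
  moreover have "dist (x + \<sigma> *\<^sub>R e + \<tau> *\<^sub>R d) x < 2 * h"
  proof -
    have "dist (x + \<sigma> *\<^sub>R e + \<tau> *\<^sub>R d) x = norm (\<sigma> *\<^sub>R e + \<tau> *\<^sub>R d)"
      by (simp add: dist_norm add.assoc)
    also have "\<dots> \<le> norm (\<sigma> *\<^sub>R e) + norm (\<tau> *\<^sub>R d)"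
      by (rule norm_triangle_ineq)
    also have "\<dots> = \<sigma> + \<tau>"
      using \<sigma> \<tau> by (simp add: e_def d_def norm_axis_1)
    finally show ?thesis
      using \<sigma> \<tau> by simp
  qed
  ultimately show ?thesis
    unfolding e_def d_def by (metis mult.assoc)
qed

lemma partial_commute:
  fixes f :: "real^'n \<Rightarrow> real"
  assumes df: "\<And>y. f differentiable at y"
    and dfi: "\<And>y. partial i f differentiable at y" and dfj: "\<And>y. partial j f differentiable at y"
    and cij: "isCont (partial j (partial i f)) x" and cji: "isCont (partial i (partial j f)) x"
  shows "partial j (partial i f) x = partial i (partial j f) x"
proof (rule ccontr)
  let ?fij = "partial j (partial i f)" and ?fji = "partial i (partial j f)"
  assume "?fij x \<noteq> ?fji x"
  define \<epsilon> where "\<epsilon> = \<bar>?fij x - ?fji x\<bar> / 2"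
  have "\<epsilon> > 0"
    using \<open>?fij x \<noteq> ?fji x\<close> by (simp add: \<epsilon>_def)
  obtain \<delta> where "\<delta> > 0" and \<delta>:
    "\<And>y. dist y x < \<delta> \<Longrightarrow> \<bar>?fij y - ?fij x\<bar> < \<epsilon> \<and> \<bar>?fji y - ?fji x\<bar> < \<epsilon>"
  proof -
    obtain \<delta>1 where "\<delta>1 > 0" "\<And>y. dist y x < \<delta>1 \<Longrightarrow> dist (?fij y) (?fij x) < \<epsilon>"
      using cij \<open>\<epsilon> > 0\<close> unfolding continuous_at_eps_delta by blast
    moreover obtain \<delta>2 where "\<delta>2 > 0" "\<And>y. dist y x < \<delta>2 \<Longrightarrow> dist (?fji y) (?fji x) < \<epsilon>"
      using cji \<open>\<epsilon> > 0\<close> unfolding continuous_at_eps_delta by blast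
    ultimately show ?thesis
      using that[of "min \<delta>1 \<delta>2"] by (simp add: dist_real_def)
  qed
  define h where "h = \<delta> / 2"
  have "h > 0"
    using \<open>\<delta> > 0\<close> by (simp add: h_def)
  obtain y where y: "dist y x < \<delta>" and eq_ij:
    "f (x + h *\<^sub>R axis i 1 + h *\<^sub>R axis j 1) - f (x + h *\<^sub>R axis i 1) - f (x + h *\<^sub>R axis j 1) + f x
      = h * h * ?fij y"
    using second_difference_mvt[OF df dfi \<open>h > 0\<close>, of x j] by (auto simp: h_def)
  obtain y' where y': "dist y' x < \<delta>" and eq_ji:
    "f (x + h *\<^sub>R axis j 1 + h *\<^sub>R axis i 1) - f (x + h *\<^sub>R axis j 1) - f (x + h *\<^sub>R axis i 1) + f x
      = h * h * ?fji y'"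
    using second_difference_mvt[OF df dfj \<open>h > 0\<close>, of x i] by (auto simp: h_def)
  have swap: "x + h *\<^sub>R axis j 1 + h *\<^sub>R axis i 1 = x + h *\<^sub>R axis i 1 + h *\<^sub>R axis j 1"
    by (simp add: algebra_simps)
  have "h * h * ?fij y = h * h * ?fji y'"
    using eq_ij eq_ji[unfolded swap] by linarith
  then have "?fij y = ?fji y'"
    using \<open>h > 0\<close> by simp
  then show False
    using \<delta>[OF y] \<delta>[OF y'] by (simp add: \<epsilon>_def abs_if split: if_splits)
qed

lemma smooth_fun_differentiable:
  assumes "smooth_fun f"
  shows "f differentiable at x"
  using assms unfolding smooth_fun_def differentiable_on_def
  by (metis at_within_open foldr_Nil id_apply iter_partial_def open_UNIV UNIV_I)

lemma smooth_fun_partial: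
  assumes "smooth_fun f"
  shows "smooth_fun (partial i f)"
  unfolding smooth_fun_def
proof
  fix "is" :: "'a list"
  have "iter_partial is (partial i f) = iter_partial (is @ [i]) f"
    by (simp add: iter_partial_def)
  then show "iter_partial is (partial i f) differentiable_on UNIV"
    using assms by (simp add: smooth_fun_def)
qed

lemma smooth_fun_partial_commute:
  assumes "smooth_fun f"
  shows "partial j (partial i f) x = partial i (partial j f) x"
proof (rule partial_commute)
  have "smooth_fun (partial j (partial i f))" "smooth_fun (partial i (partial j f))"
    using assms by (simp_all add: smooth_fun_partial)
  then show "isCont (partial j (partial i f)) x" "isCont (partial i (partial j f)) x"
    by (simp_all add: differentiable_imp_continuous_within smooth_fun_differentiable)
qed (use assms in \<open>simp_all add: smooth_fun_differentiable smooth_fun_partial\<close>)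

lemma has_derivative_grad:
  fixes f :: "real^'n \<Rightarrow> real"
  assumes "smooth_fun f"
  shows "(grad f has_derivative (\<lambda>v. hessian f q *v v)) (at q)"
proof -
  have "(grad f has_derivative (\<lambda>v. \<chi> i. \<Sum>k\<in>UNIV. partial k (partial i f) q * v $ k)) (at q)"
    unfolding grad_def[abs_def] using assms
    by (intro has_derivative_vec_lambda has_derivative_partial_sum smooth_fun_differentiable
        smooth_fun_partial)
  moreover have "(\<lambda>v. \<chi> i. \<Sum>k\<in>UNIV. partial k (partial i f) q * v $ k) = (\<lambda>v. hessian f q *v v)"
    using smooth_fun_partial_commute[OF assms]
    by (simp add: fun_eq_iff vec_eq_iff hessian_def matrix_vector_mult_def mult.commute)
  ultimately show ?thesis
    by simp
qed

lemma hessian_mult_eq_sum_grad: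
  "hessian f q *v w = (\<Sum>j\<in>UNIV. w $ j *\<^sub>R grad (partial j f) q)"
  by (simp add: vec_eq_iff hessian_def grad_def matrix_vector_mult_def sum_component mult.commute)

lemma third_deriv_eq_sum_hessian:
  "third_deriv f q v \<zeta> = (\<Sum>j\<in>UNIV. \<zeta> $ j *\<^sub>R (hessian (partial j f) q *v v))"
  unfolding vec_eq_iff third_deriv_def hessian_def matrix_vector_mult_def
  by (auto simp: sum_component sum_distrib_left mult_ac intro: sum.swap)

text \<open>Expressing the Hessian term through the gradients of the partials \<open>\<partial>\<^sub>jF\<close>
  lets the product and chain rules compute the differential of \<open>\<Psi>\<close>; the third
  derivative then appears as the Hessians of the \<open>\<partial>\<^sub>jF\<close>.\<close>

lemma Psi_map_eq_sum_grad:
  "Psi_map f = (\<lambda>p. (fst p + snd p,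
     grad f (fst p) + (\<Sum>j\<in>UNIV. snd p $ j *\<^sub>R grad (partial j f) (fst p))))"
  by (auto simp: fun_eq_iff Psi_map_def hessian_mult_eq_sum_grad)

lemma has_derivative_Psi_map:
  fixes f :: "real^'n \<Rightarrow> real"
  assumes "smooth_fun f"
  shows "(Psi_map f has_derivative
           (\<lambda>(a, b). (a + b, hessian f q *v (a + b) + third_deriv f q a w))) (at (q, w))"
proof -
  have grad_fst: "((\<lambda>p. grad g (fst p)) has_derivative (\<lambda>p. hessian g q *v fst p)) (at (q, w))"
    if "smooth_fun g" for g :: "real^'n \<Rightarrow> real"
  proof -
    have "((\<lambda>p. fst p) has_derivative (\<lambda>p. fst p)) (at (q, w))"
      by (rule has_derivative_fst[OF has_derivative_ident])
    from has_derivative_compose[OF this has_derivative_grad[OF that]] show ?thesis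
      by simp
  qed
  have snd_nth: "((\<lambda>p. snd p $ j) has_derivative (\<lambda>p. snd p $ j)) (at (q, w))" for j
    by (intro bounded_linear.has_derivative[OF _ has_derivative_ident]
        bounded_linear_compose[OF bounded_linear_vec_nth bounded_linear_snd])
  have "((\<lambda>p. snd p $ j *\<^sub>R grad (partial j f) (fst p)) has_derivative
      (\<lambda>p. w $ j *\<^sub>R (hessian (partial j f) q *v fst p) + snd p $ j *\<^sub>R grad (partial j f) q))
      (at (q, w))" for j
    using has_derivative_scaleR[OF snd_nth grad_fst[OF smooth_fun_partial[OF assms]]] by simp
  then have "(Psi_map f has_derivative (\<lambda>p. (fst p + snd p, hessian f q *v fst p +
      (\<Sum>j\<in>UNIV. w $ j *\<^sub>R (hessian (partial j f) q *v fst p) + snd p $ j *\<^sub>R grad (partial j f) q))))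
      (at (q, w))"
    unfolding Psi_map_eq_sum_grad
    by (intro has_derivative_Pair has_derivative_add has_derivative_fst has_derivative_snd
        has_derivative_ident has_derivative_sum grad_fst assms)
  moreover have "(\<lambda>p. (fst p + snd p, hessian f q *v fst p +
      (\<Sum>j\<in>UNIV. w $ j *\<^sub>R (hessian (partial j f) q *v fst p) + snd p $ j *\<^sub>R grad (partial j f) q)))
      = (\<lambda>(a, b). (a + b, hessian f q *v (a + b) + third_deriv f q a w))"
    by (auto simp: sum.distrib third_deriv_eq_sum_hessian hessian_mult_eq_sum_grad
        matrix_vector_right_distrib)
  ultimately show ?thesis
    by simp
qed

lemma surj_shear_iff:
  fixes H T :: "'a::ab_group_add \<Rightarrow> 'a"
  shows "surj (\<lambda>(a, b). (a + b, H (a + b) + T a)) \<longleftrightarrow> surj T"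
proof
  assume surj_shear: "surj (\<lambda>(a, b). (a + b, H (a + b) + T a))"
  show "surj T"
    unfolding surj_def
  proof
    fix y
    obtain a b where "(0, y + H 0) = (a + b, H (a + b) + T a)"
      using surjD[OF surj_shear, of "(0, y + H 0)"] by auto
    then have "a + b = 0" and "y + H 0 = H (a + b) + T a"
      by simp_all
    then have "y = T a"
      by simp
    then show "\<exists>x. y = T x" ..
  qed
next
  assume "surj T"
  show "surj (\<lambda>(a, b). (a + b, H (a + b) + T a))"
  proof (rule surjI[where f = "\<lambda>(u, v). (inv T (v - H u), u - inv T (v - H u))"])
    fix p :: "'a \<times> 'a"
    show "(\<lambda>(a, b). (a + b, H (a + b) + T a)) ((\<lambda>(u, v). (inv T (v - H u), u - inv T (v - H u))) p) = p"
      using \<open>surj T\<close> by (simp add: surj_f_inv_f split: prod.split)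
  qed
qed

lemma linear_third_deriv:
  fixes f :: "real^'n \<Rightarrow> real"
  shows "linear (\<lambda>v. third_deriv f q v \<zeta>)"
proof (rule linearI)
  fix u v :: "real^'n" and c :: real
  show "third_deriv f q (u + v) \<zeta> = third_deriv f q u \<zeta> + third_deriv f q v \<zeta>"
    by (simp add: vec_eq_iff third_deriv_def distrib_left distrib_right sum.distrib)
  show "third_deriv f q (c *\<^sub>R v) \<zeta> = c *\<^sub>R third_deriv f q v \<zeta>"
    by (simp add: vec_eq_iff third_deriv_def sum_distrib_left mult.assoc mult.left_commute)
qed

lemma critical_points_Psi_map:
  fixes F :: "real^'n \<Rightarrow> real"
  assumes "smooth_fun F"
  shows "critical_points (Psi_map F) = {(q, w). \<not> bij (\<lambda>\<zeta>. third_deriv F q \<zeta> w)}"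
proof -
  have "surj (frechet_derivative (Psi_map F) (at (q, w))) \<longleftrightarrow> bij (\<lambda>\<zeta>. third_deriv F q \<zeta> w)"
    for q w
  proof -
    have "frechet_derivative (Psi_map F) (at (q, w))
        = (\<lambda>(a, b). (a + b, hessian F q *v (a + b) + third_deriv F q a w))"
      using frechet_derivative_at[OF has_derivative_Psi_map[OF assms]] by (rule sym)
    then have "surj (frechet_derivative (Psi_map F) (at (q, w))) \<longleftrightarrow> surj (\<lambda>\<zeta>. third_deriv F q \<zeta> w)"
      using surj_shear_iff[of "\<lambda>v. hessian F q *v v" "\<lambda>a. third_deriv F q a w"] by simp
    also have "\<dots> \<longleftrightarrow> bij (\<lambda>\<zeta>. third_deriv F q \<zeta> w)"
      using linear_surj_imp_inj[OF linear_third_deriv] by (auto simp: bij_def)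
    finally show ?thesis .
  qed
  then show ?thesis
    by (auto simp: critical_points_def)
qed

theorem mainTheorem17:
  fixes F :: "real^'n \<Rightarrow> real"
  assumes "smooth_fun F"
  shows "critical_points (Psi_map F) =
           {(q, w). \<not> bij (\<lambda>\<zeta>. third_deriv F q \<zeta> w)}
         \<and> (\<forall>q w. Psi_map F (q, w) \<in> Psi_map F ` critical_points (Psi_map F) \<longleftrightarrow>
              (\<exists>q' w'. Psi_map F (q', w') = Psi_map F (q, w) \<and>
                 \<not> bij (\<lambda>\<zeta>. third_deriv F q' \<zeta> w')))"
proof -
  have image_pairs: "y \<in> g ` {(a, b). P a b} \<longleftrightarrow> (\<exists>a b. g (a, b) = y \<and> P a b)"
    for g :: "'a \<times> 'b \<Rightarrow> 'c" and P y
    by force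
  show ?thesis
    unfolding critical_points_Psi_map[OF assms] image_pairs by simp
qed

end
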